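(* Let $b\ge1$, $1\le a\le b$, $t\ge0$ be integers and $d=2t+1$. Let $\nu^{\text{off-diag}}$ be the number of pairs $(k,q)$ with $k$ odd, $1\le k<d$, $-k\le q\le k$, $q\equiv 2a-1\pmod{2b}$. Then $\nu^{\text{off-diag}}=\tfrac{t^2}{b}+\tfrac{t}{b}+\tfrac{2a(a-b-1)+b+1}{2b}+c$, where $c=\tfrac{1}{2b}[t+1-a]_b^2+\tfrac{1}{2b}[t+1-a]_b\big(b-2-2[t-a]_b\big)+\tfrac{1}{2b}[t+a]_b\big(b-2-2[a+t-1]_b+[a+t]_b\big)$, and $0\le c\le 2b$.
   Context: For an integer $x$ and positive integer $y$, $[x]_y:=x\bmod y\in\{0,\dots,y-1\}$. *)

theory Defs
  imports Complex_Main "HOL-Number_Theory.Cong"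
begin

definition nu_offdiag :: "int \<Rightarrow> int \<Rightarrow> int \<Rightarrow> nat" where
  "nu_offdiag a b d = card ({(k, q). odd k \<and> 1 \<le> k \<and> k < d \<and> - k \<le> q \<and> q \<le> k
                                    \<and> [q = 2 * a - 1] (mod (2 * b))} :: (int \<times> int) set)"

end

theory Submission
  imports Defs
begin

text \<open>
  The pairs with k = 2s + 1 are the q = 2a - 1 + 2bj with -(s + a) <= bj <= s + 1 - a, so
  row k contains (s + a) div b + (s + 1 - a) div b + 1 of them. Summing over s < t, write
  b ((s + r) div b) = s + r - (s + r) mod b; the remainders telescope against the b-periodic
  parabola (u mod b) (b - u mod b), whose forward difference is b - 1 - 2 (u mod b).
  The correction c is this parabola at t + 1 - a plus its value at t + a, divided by 2b,
  so 0 <= c <= b/4.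
\<close>

lemma int_less_eq_div_iff_mult_less_eq:
  fixes m n q :: int
  assumes "0 < q"
  shows "m \<le> n div q \<longleftrightarrow> m * q \<le> n"
proof -
  have "m \<le> n div q \<longleftrightarrow> real_of_int m \<le> real_of_int n / real_of_int q"
    by (metis floor_divide_of_int_eq le_floor_iff)
  also have "\<dots> \<longleftrightarrow> m * q \<le> n"
    using assms by (simp add: pos_le_divide_eq flip: of_int_mult)
  finally show ?thesis .
qed

lemma card_multiples_between:
  fixes A B b :: int
  assumes "0 < b" and "0 \<le> A + B"
  shows "int (card {j. - A \<le> j * b \<and> j * b \<le> B}) = A div b + B div b + 1"
proof -
  have "{j. - A \<le> j * b \<and> j * b \<le> B} = {- (A div b) .. B div b}"
    using assms(1) by (auto simp: int_less_eq_div_iff_mult_less_eq minus_le_iff)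
  moreover have "A < A div b * b + b"
    using pos_mod_bound[of b A] assms(1) div_mult_mod_eq[of A b] by linarith
  then have "(- (A div b) - 1) * b \<le> B"
    using assms(2) by (simp add: algebra_simps)
  then have "- (A div b) - 1 \<le> B div b"
    using assms(1) by (simp add: int_less_eq_div_iff_mult_less_eq)
  ultimately show ?thesis by simp
qed

definition offdiag_row :: "int \<Rightarrow> int \<Rightarrow> int \<Rightarrow> int set" where
  "offdiag_row a b k = {q. - k \<le> q \<and> q \<le> k \<and> [q = 2 * a - 1] (mod (2 * b))}"

lemma card_offdiag_row:
  fixes a b s :: int
  assumes "0 < b" and "0 \<le> s"
  shows "int (card (offdiag_row a b (2 * s + 1))) = (s + a) div b + (s + 1 - a) div b + 1"
proof -
  let ?J = "{j. - (s + a) \<le> j * b \<and> j * b \<le> s + 1 - a}"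
  have "offdiag_row a b (2 * s + 1) = (\<lambda>j. 2 * a - 1 + j * (2 * b)) ` ?J"
  proof (intro set_eqI iffI)
    fix q assume "q \<in> offdiag_row a b (2 * s + 1)"
    then have q: "- (2 * s + 1) \<le> q" "q \<le> 2 * s + 1" "2 * b dvd q - (2 * a - 1)"
      by (auto simp: offdiag_row_def cong_iff_dvd_diff)
    then obtain j where "q - (2 * a - 1) = j * (2 * b)"
      by (metis dvdE mult.commute)
    with q show "q \<in> (\<lambda>j. 2 * a - 1 + j * (2 * b)) ` ?J"
      by (intro image_eqI[of _ _ j]) auto
  next
    fix q assume "q \<in> (\<lambda>j. 2 * a - 1 + j * (2 * b)) ` ?J"
    then show "q \<in> offdiag_row a b (2 * s + 1)"
      by (auto simp: offdiag_row_def cong_iff_dvd_diff)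
  qed
  moreover have "inj_on (\<lambda>j. 2 * a - 1 + j * (2 * b)) ?J"
    using assms(1) by (auto intro: inj_onI)
  ultimately show ?thesis
    using card_multiples_between[of b "s + a" "s + 1 - a"] assms by (simp add: card_image)
qed

lemma nu_offdiag_eq_sum_rows:
  "nu_offdiag a b (2 * int n + 1) = (\<Sum>s<n. card (offdiag_row a b (2 * int s + 1)))"
proof -
  have "{(k, q). odd k \<and> 1 \<le> k \<and> k < 2 * int n + 1 \<and> - k \<le> q \<and> q \<le> k
                \<and> [q = 2 * a - 1] (mod (2 * b))}
        = Sigma ((\<lambda>s. 2 * int s + 1) ` {..<n}) (offdiag_row a b)"
  proof (intro set_eqI iffI)
    fix x assume "x \<in> {(k, q). odd k \<and> 1 \<le> k \<and> k < 2 * int n + 1 \<and> - k \<le> q \<and> q \<le> k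
                \<and> [q = 2 * a - 1] (mod (2 * b))}"
    then obtain k q where x: "x = (k, q)" "odd k" "1 \<le> k" "k < 2 * int n + 1"
      and row: "q \<in> offdiag_row a b k"
      by (auto simp: offdiag_row_def)
    moreover obtain m where "k = 2 * m + 1"
      using x(2) by (rule oddE)
    moreover obtain s where "m = int s"
      using x(3) \<open>k = 2 * m + 1\<close> nonneg_int_cases[of m] by auto
    ultimately have "k = 2 * int s + 1" "s < n"
      by auto
    with x(1) row show "x \<in> Sigma ((\<lambda>s. 2 * int s + 1) ` {..<n}) (offdiag_row a b)"
      by auto
  next
    fix x assume "x \<in> Sigma ((\<lambda>s. 2 * int s + 1) ` {..<n}) (offdiag_row a b)"
    then show "x \<in> {(k, q). odd k \<and> 1 \<le> k \<and> k < 2 * int n + 1 \<and> - k \<le> q \<and> q \<le> k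
                \<and> [q = 2 * a - 1] (mod (2 * b))}"
      by (auto simp: offdiag_row_def)
  qed
  moreover have "finite (offdiag_row a b k)" for k
    by (rule finite_subset[of _ "{- k..k}"]) (auto simp: offdiag_row_def)
  ultimately show ?thesis
    unfolding nu_offdiag_def by (simp add: card_SigmaI sum.reindex inj_on_def)
qed

definition mod_tent :: "int \<Rightarrow> int \<Rightarrow> int" where
  "mod_tent b u = u mod b * (b - u mod b)"

lemma mod_tent_eq:
  fixes b u :: int
  assumes "0 \<le> u" and "u \<le> b"
  shows "mod_tent b u = u * (b - u)"
  using assms by (cases "u = b") (simp_all add: mod_tent_def)

lemma mod_tent_add_self: "mod_tent b (u + b) = mod_tent b u"
  by (simp add: mod_tent_def)

lemma mod_tent_bounds:
  fixes b u :: int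
  assumes "0 < b"
  shows "0 \<le> mod_tent b u" and "4 * mod_tent b u \<le> b\<^sup>2"
proof -
  let ?x = "u mod b"
  show "0 \<le> mod_tent b u"
    using assms by (simp add: mod_tent_def pos_mod_bound less_imp_le)
  have "b\<^sup>2 - 4 * mod_tent b u = (b - 2 * ?x)\<^sup>2"
    by (simp add: mod_tent_def power2_eq_square algebra_simps)
  then show "4 * mod_tent b u \<le> b\<^sup>2"
    by (metis diff_ge_0_iff_ge zero_le_power2)
qed

lemma mod_succ_cases:
  fixes b u :: int
  assumes "0 < b"
  obtains "(u + 1) mod b = u mod b + 1" | "u mod b = b - 1" and "(u + 1) mod b = 0"
proof -
  have "(u + 1) mod b = (u mod b + 1) mod b"
    by (simp add: mod_add_left_eq)
  moreover have "0 \<le> u mod b" "u mod b < b"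
    using assms by simp_all
  ultimately show thesis
    using that by (cases "u mod b + 1 = b") auto
qed

lemma mod_tent_succ:
  fixes b u :: int
  assumes "0 < b"
  shows "mod_tent b (u + 1) = mod_tent b u + b - 1 - 2 * (u mod b)"
  using assms
proof (cases rule: mod_succ_cases[of b u])
  case 1
  then show ?thesis by (simp add: mod_tent_def algebra_simps)
next
  case 2
  then show ?thesis by (simp add: mod_tent_def)
qed

lemma mod_tent_succ_via_mods:
  fixes b u :: int
  assumes "0 < b"
  shows "(u + 1) mod b * (b - 2 - 2 * (u mod b) + (u + 1) mod b) = mod_tent b (u + 1)"
  using assms
proof (cases rule: mod_succ_cases[of b u])
  case 1
  then show ?thesis by (simp add: mod_tent_def algebra_simps)
next
  case 2
  then show ?thesis by (simp add: mod_tent_def)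
qed

lemma sum_div_eq_mod_tent:
  fixes b r :: int
  assumes "0 < b"
  shows "2 * b * (\<Sum>s<n. (int s + r) div b)
           = int n * (int n - b) + 2 * r * int n + mod_tent b (int n + r) - mod_tent b r"
proof (induction n)
  case 0
  show ?case by simp
next
  case (Suc n)
  have "2 * b * (\<Sum>s<Suc n. (int s + r) div b)
          = 2 * b * (\<Sum>s<n. (int s + r) div b) + 2 * (b * ((int n + r) div b))"
    by (simp add: algebra_simps)
  moreover have "b * ((int n + r) div b) = int n + r - (int n + r) mod b"
    using mult_div_mod_eq[of b "int n + r"] by linarith
  moreover have "mod_tent b (int (Suc n) + r) = mod_tent b (int n + r) + b - 1 - 2 * ((int n + r) mod b)"
    using mod_tent_succ[OF assms, of "int n + r"] by (simp add: add_ac)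
  moreover have "int (Suc n) * (int (Suc n) - b) = int n * (int n - b) + 2 * int n + 1 - b"
    by (simp add: algebra_simps)
  ultimately show ?case
    using Suc.IH by (simp add: distrib_left)
qed

lemma offdiag_count_closed_form:
  fixes a b t :: int
  assumes "0 < b" and "1 \<le> a" and "a \<le> b" and "0 \<le> t"
  shows "2 * b * int (nu_offdiag a b (2 * t + 1))
           = 2 * t\<^sup>2 + 2 * t + (2 * a * (a - b - 1) + b + 1)
             + (mod_tent b (t + 1 - a) + mod_tent b (t + a))"
proof -
  obtain n where t: "t = int n"
    using assms(4) nonneg_int_cases by blast
  have "int (nu_offdiag a b (2 * t + 1))
          = (\<Sum>s<n. (int s + a) div b) + (\<Sum>s<n. (int s + (1 - a)) div b) + t"
    using card_offdiag_row[OF assms(1)]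
    by (simp add: t nu_offdiag_eq_sum_rows sum.distrib add_diff_eq)
  moreover have "mod_tent b a = a * (b - a)"
    using assms by (simp add: mod_tent_eq)
  moreover have "mod_tent b (1 - a) = (b + 1 - a) * (a - 1)"
    using mod_tent_add_self[of b "1 - a"] mod_tent_eq[of "b + 1 - a" b] assms
    by (simp add: algebra_simps)
  ultimately show ?thesis
    using sum_div_eq_mod_tent[OF assms(1), of a n] sum_div_eq_mod_tent[OF assms(1), of "1 - a" n]
    by (simp add: t algebra_simps power2_eq_square)
qed

lemma offdiag_correction_eq_mod_tent:
  fixes a b t :: int
  assumes "0 < b"
  shows "((t + 1 - a) mod b)\<^sup>2 + ((t + 1 - a) mod b) * (b - 2 - 2 * ((t - a) mod b))
           + ((t + a) mod b) * (b - 2 - 2 * ((a + t - 1) mod b) + (a + t) mod b)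
         = mod_tent b (t + 1 - a) + mod_tent b (t + a)"
  using mod_tent_succ_via_mods[OF assms, of "t - a"] mod_tent_succ_via_mods[OF assms, of "a + t - 1"]
  by (simp add: power2_eq_square algebra_simps)

theorem lemmaS12:
  fixes a b t :: int
  assumes "b \<ge> 1" and "1 \<le> a" and "a \<le> b" and "t \<ge> 0"
  shows "let d = 2 * t + 1;
             c = (1 / (2 * real_of_int b)) * of_int (((t + 1 - a) mod b)^2)
               + (1 / (2 * real_of_int b)) * of_int (((t + 1 - a) mod b) * (b - 2 - 2 * ((t - a) mod b)))
               + (1 / (2 * real_of_int b)) * of_int (((t + a) mod b) * (b - 2 - 2 * ((a + t - 1) mod b) + (a + t) mod b))
         in real (nu_offdiag a b d)
              = of_int (t^2) / of_int b + of_int t / of_int b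
                + of_int (2 * a * (a - b - 1) + b + 1) / (2 * real_of_int b) + c
            \<and> 0 \<le> c \<and> c \<le> 2 * of_int b"
proof -
  have b: "0 < b"
    using assms(1) by simp
  define K where "K = 2 * a * (a - b - 1) + b + 1"
  define T where "T = mod_tent b (t + 1 - a) + mod_tent b (t + a)"
  have "real_of_int (2 * b * int (nu_offdiag a b (2 * t + 1))) = of_int (2 * t\<^sup>2 + 2 * t + K + T)"
    using offdiag_count_closed_form[OF b assms(2-4)] by (simp only: K_def T_def)
  then have count: "real (nu_offdiag a b (2 * t + 1))
                      = (2 * of_int (t\<^sup>2) + 2 * of_int t + of_int K + of_int T) / (2 * of_int b)"
    using b by (simp add: eq_divide_eq mult.commute)
  have "0 \<le> T" and "T \<le> 4 * b\<^sup>2"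
    using mod_tent_bounds[OF b, of "t + 1 - a"] mod_tent_bounds[OF b, of "t + a"] zero_le_power2[of b]
    unfolding T_def by linarith+
  then have "0 \<le> real_of_int T" and "real_of_int T \<le> real_of_int (4 * b\<^sup>2)"
    by (simp_all only: of_int_0_le_iff of_int_le_iff)
  with b show ?thesis
    unfolding Let_def distrib_left[symmetric] of_int_add[symmetric] offdiag_correction_eq_mod_tent[OF b]
    unfolding T_def[symmetric] K_def[symmetric] count
    by (simp add: field_simps power2_eq_square)
qed

end
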